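(* Let $G$ be a connected weighted undirected graph on $N$ vertices with positive edge weights and combinatorial Laplacian $L$. Let $P \in \mathbb{R}^{n\times N}$ be a coarsening matrix with respect to $G$, and let $P^+$ be its Moore–Penrose pseudoinverse. Then $L_c = (P^+)^\top L P^+$ is the combinatorial Laplacian of some weighted graph (with nonnegative weights) if and only if all nonzero entries of $P^+$ are equal.
   Context: The combinatorial Laplacian of a weighted graph with weights $w_{ij}\ge 0$ is $L(i,i) = \deg_i = \sum_j w_{ij}$, $L(i,j) = -w_{ij}$ for $i\ne j$. A matrix $P\in\mathbb{R}^{n\times N}$ is a coarsening matrix w.r.t. $G$ if: (a) every column of $P$ has exactly one nonzero entry and every row is nonzero (i.e., each vertex of $G$ is assigned to exactly one row); (b) for every row $r$, the subgraph of $G$ induced by the vertices $\{v_i : P(r,i)\ne 0\}$ is connected. *)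

theory Defs
  imports "HOL-Analysis.Analysis"
begin

text \<open>A weighted undirected graph on the vertex type 'v (finite) is given by its weight
  function: nonnegative, symmetric, no self-loops. Edges are the pairs with positive weight.\<close>
definition weighted_graph :: "('v::finite \<Rightarrow> 'v \<Rightarrow> real) \<Rightarrow> bool" where
  "weighted_graph w \<longleftrightarrow> (\<forall>i j. w i j \<ge> 0) \<and> (\<forall>i j. w i j = w j i) \<and> (\<forall>i. w i i = 0)"

definition laplacian :: "('v::finite \<Rightarrow> 'v \<Rightarrow> real) \<Rightarrow> real^'v^'v" where
  "laplacian w = (\<chi> i j. if i = j then (\<Sum>k\<in>UNIV. w i k) else - w i j)"

definition is_comb_laplacian :: "real^'v^'v \<Rightarrow> bool" where
  "is_comb_laplacian M \<longleftrightarrow> (\<exists>w. weighted_graph w \<and> M = laplacian (w :: 'v::finite \<Rightarrow> 'v \<Rightarrow> real))"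

definition induced_connected :: "('v \<Rightarrow> 'v \<Rightarrow> real) \<Rightarrow> 'v set \<Rightarrow> bool" where
  "induced_connected w S \<longleftrightarrow>
     (\<forall>i\<in>S. \<forall>j\<in>S. (\<lambda>a b. a \<in> S \<and> b \<in> S \<and> w a b > 0)\<^sup>*\<^sup>* i j)"

definition connected_graph :: "('v \<Rightarrow> 'v \<Rightarrow> real) \<Rightarrow> bool" where
  "connected_graph w \<longleftrightarrow> induced_connected w UNIV"

definition coarsening_matrix :: "('v \<Rightarrow> 'v \<Rightarrow> real) \<Rightarrow> real^'v^'r \<Rightarrow> bool" where
  "coarsening_matrix w P \<longleftrightarrow>
     (\<forall>i. \<exists>!r. P $ r $ i \<noteq> 0) \<and>
     (\<forall>r. \<exists>i. P $ r $ i \<noteq> 0) \<and>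
     (\<forall>r. induced_connected w {i. P $ r $ i \<noteq> 0})"

text \<open>Moore--Penrose pseudoinverse, via the four Penrose conditions (unique solution).\<close>
definition penrose_conds :: "real^'n^'m \<Rightarrow> real^'m^'n \<Rightarrow> bool" where
  "penrose_conds A X \<longleftrightarrow>
     A ** X ** A = A \<and> X ** A ** X = X \<and>
     transpose (A ** X) = A ** X \<and> transpose (X ** A) = X ** A"

definition pinv :: "real^'n^'m \<Rightarrow> real^'m^'n" where
  "pinv A = (THE X. penrose_conds A X)"

end

theory Submission imports Defs begin

text \<open>Write \<open>Q = pinv P\<close>. Since the columns of a coarsening matrix have a single nonzero entry,
  its rows are orthogonal and \<open>Q\<close> is \<open>P\<^sup>T\<close> with its columns rescaled, so every row of \<open>Q\<close> has
  a single nonzero entry too. For \<open>x = Q 1\<close> the total row sum of \<open>M = Q\<^sup>T L Q\<close> is the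
  quadratic form \<open>x\<^sup>T L x = \<Sum> w\<^sub>i\<^sub>j (x\<^sub>i - x\<^sub>j)\<^sup>2 / 2\<close>. If \<open>M\<close> is a Laplacian its row sums vanish,
  so \<open>x\<close> is constant on the connected graph, i.e. all nonzero entries of \<open>Q\<close> agree. Conversely,
  if they agree then \<open>L x = 0\<close> gives zero row sums, and the off-diagonal entries
  \<open>\<Sum> Q\<^sub>i\<^sub>r L\<^sub>i\<^sub>j Q\<^sub>j\<^sub>s\<close> are nonpositive because only the terms with \<open>i \<noteq> j\<close> survive.\<close>

lemma penrose_conds_unique:
  fixes A :: "real^'n::finite^'m::finite"
  assumes "penrose_conds A X" "penrose_conds A Y"
  shows "X = Y"
proof -
  have a: "A ** X ** A = A" "X ** A ** X = X" "transpose (A ** X) = A ** X" "transpose (X ** A) = X ** A"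
    using assms(1) unfolding penrose_conds_def by auto
  have b: "A ** Y ** A = A" "Y ** A ** Y = Y" "transpose (A ** Y) = A ** Y" "transpose (Y ** A) = Y ** A"
    using assms(2) unfolding penrose_conds_def by auto
  have tA1: "transpose A = transpose A ** (A ** Y)"
    by (metis b(1) b(3) matrix_transpose_mul)
  have tA2: "transpose A = (X ** A) ** transpose A"
    by (metis a(1) a(4) matrix_transpose_mul matrix_mul_assoc)
  have "X = X ** (A ** X)" using a(2) by (simp add: matrix_mul_assoc)
  also have "\<dots> = X ** (transpose X ** transpose A)" by (metis a(3) matrix_transpose_mul)
  also have "\<dots> = X ** (transpose X ** (transpose A ** (A ** Y)))" using tA1 by simp
  also have "\<dots> = X ** ((transpose (A ** X)) ** (A ** Y))" by (simp add: matrix_transpose_mul matrix_mul_assoc)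
  also have "\<dots> = X ** A ** Y" using a(2) a(3) by (simp add: matrix_mul_assoc)
  finally have x: "X = X ** A ** Y" .
  have "Y = (Y ** A) ** Y" using b(2) by simp
  also have "\<dots> = (transpose A ** transpose Y) ** Y" by (metis b(4) matrix_transpose_mul)
  also have "\<dots> = (((X ** A) ** transpose A) ** transpose Y) ** Y" using tA2 by simp
  also have "\<dots> = ((X ** A) ** (transpose (Y ** A))) ** Y" by (simp add: matrix_transpose_mul matrix_mul_assoc)
  also have "\<dots> = X ** A ** Y" using b(2) b(4) by (metis matrix_mul_assoc)
  finally show ?thesis using x by simp
qed

lemma pinv_eqI:
  fixes A :: "real^'n::finite^'m::finite"
  assumes "penrose_conds A X"
  shows "pinv A = X"
  unfolding pinv_def using assms penrose_conds_unique by blast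

lemma penrose_conds_right_inverse:
  fixes A :: "real^'n::finite^'m::finite"
  assumes "A ** X = mat 1" and "transpose (X ** A) = X ** A"
  shows "penrose_conds A X"
  using assms unfolding penrose_conds_def
  by (metis matrix_mul_assoc matrix_mul_lid matrix_mul_rid transpose_mat)

lemma pinv_orthogonal_rows:
  fixes A :: "real^'n::finite^'m::finite"
  assumes orthogonal: "\<And>r s. r \<noteq> s \<Longrightarrow> A $ r \<bullet> A $ s = 0"
    and nonzero: "\<And>r. A $ r \<noteq> 0"
  shows "pinv A = (\<chi> i r. A $ r $ i / (A $ r \<bullet> A $ r))"
proof (rule pinv_eqI, rule penrose_conds_right_inverse)
  let ?X = "\<chi> i r. A $ r $ i / (A $ r \<bullet> A $ r)"
  have "(A ** ?X) $ r $ s = mat 1 $ r $ s" for r s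
  proof -
    have "(A ** ?X) $ r $ s = A $ r \<bullet> A $ s / (A $ s \<bullet> A $ s)"
      by (simp add: matrix_matrix_mult_def inner_vec_def sum_divide_distrib)
    then show ?thesis
      using orthogonal[of r s] nonzero[of s] by (simp add: mat_def)
  qed
  then show "A ** ?X = mat 1"
    by (simp add: vec_eq_iff)
  show "transpose (?X ** A) = ?X ** A"
    by (simp add: vec_eq_iff transpose_def matrix_matrix_mult_def mult.commute)
qed

lemma rows_orthogonal_if_columns_single_nonzero:
  fixes A :: "real^'n::finite^'m::finite"
  assumes "\<And>i. \<exists>!r. A $ r $ i \<noteq> 0" and "r \<noteq> s"
  shows "A $ r \<bullet> A $ s = 0"
  unfolding inner_vec_def by (rule sum.neutral) (use assms in auto)

lemma laplacian_mult_vec_nth: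
  assumes "w i i = 0"
  shows "(laplacian w *v x) $ i = (\<Sum>j\<in>UNIV. w i j * (x $ i - x $ j))"
proof -
  have "(laplacian w *v x) $ i = (\<Sum>k\<in>UNIV. w i k) * x $ i + (\<Sum>j\<in>UNIV-{i}. - w i j * x $ j)"
    by (simp add: matrix_vector_mult_def sum.remove[of UNIV i] laplacian_def)
  also have "(\<Sum>j\<in>UNIV-{i}. - w i j * x $ j) = (\<Sum>j\<in>UNIV. - w i j * x $ j)"
    by (simp add: sum.remove[of UNIV i] assms)
  also have "(\<Sum>k\<in>UNIV. w i k) * x $ i + (\<Sum>j\<in>UNIV. - w i j * x $ j)
      = (\<Sum>j\<in>UNIV. w i j * (x $ i - x $ j))"
    by (simp add: sum_distrib_right sum_negf sum_subtractf right_diff_distrib)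
  finally show ?thesis .
qed

lemma transpose_laplacian:
  assumes "weighted_graph w"
  shows "transpose (laplacian w) = laplacian w"
  using assms by (simp add: vec_eq_iff transpose_def laplacian_def weighted_graph_def)

lemma laplacian_quadratic_form:
  assumes "weighted_graph w"
  shows "x \<bullet> (laplacian w *v x) = (\<Sum>i\<in>UNIV. \<Sum>j\<in>UNIV. w i j * (x $ i - x $ j)\<^sup>2) / 2"
proof -
  have diag: "w i i = 0" and sym: "w i j = w j i" for i j
    using assms by (auto simp: weighted_graph_def)
  let ?S = "\<Sum>i\<in>UNIV. \<Sum>j\<in>UNIV. w i j * x $ i * (x $ i - x $ j)"
  have form: "x \<bullet> (laplacian w *v x) = ?S"
    by (simp add: inner_vec_def laplacian_mult_vec_nth diag sum_distrib_left algebra_simps)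
  have swapped: "?S = (\<Sum>i\<in>UNIV. \<Sum>j\<in>UNIV. w i j * x $ j * (x $ j - x $ i))"
    by (subst sum.swap) (simp add: sym)
  have "2 * ?S = (\<Sum>i\<in>UNIV. \<Sum>j\<in>UNIV. w i j * x $ i * (x $ i - x $ j) + w i j * x $ j * (x $ j - x $ i))"
    using swapped by (simp add: sum.distrib)
  also have "\<dots> = (\<Sum>i\<in>UNIV. \<Sum>j\<in>UNIV. w i j * (x $ i - x $ j)\<^sup>2)"
    by (simp add: power2_eq_square algebra_simps)
  finally show ?thesis using form by simp
qed

lemma laplacian_quadratic_form_eq_0_imp_constant:
  assumes "weighted_graph w" "connected_graph w" "x \<bullet> (laplacian w *v x) = 0"
  shows "x $ i = x $ j"
proof -
  have nonneg: "0 \<le> w i j * (x $ i - x $ j)\<^sup>2" for i j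
    using assms(1) by (simp add: weighted_graph_def)
  have "(\<Sum>i\<in>UNIV. \<Sum>j\<in>UNIV. w i j * (x $ i - x $ j)\<^sup>2) = 0"
    using laplacian_quadratic_form[OF assms(1), of x] assms(3) by simp
  then have "w i j * (x $ i - x $ j)\<^sup>2 = 0" for i j
    by (simp add: sum_nonneg_eq_0_iff sum_nonneg nonneg)
  then have edge: "w a b > 0 \<Longrightarrow> x $ a = x $ b" for a b
    by (metis less_irrefl mult_eq_0_iff power_eq_0_iff right_minus_eq)
  have "(\<lambda>a b. a \<in> UNIV \<and> b \<in> UNIV \<and> w a b > 0)\<^sup>*\<^sup>* i j"
    using assms(2) unfolding connected_graph_def induced_connected_def by blast
  then show ?thesis
    by (induction rule: rtranclp_induct) (auto dest: edge)
qed

lemma is_comb_laplacian_iff: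
  fixes M :: "real^'v::finite^'v"
  shows "is_comb_laplacian M \<longleftrightarrow>
    transpose M = M \<and> (\<forall>r s. r \<noteq> s \<longrightarrow> M $ r $ s \<le> 0) \<and> M *v 1 = 0"
proof
  assume "is_comb_laplacian M"
  then obtain W where W: "weighted_graph W" "M = laplacian W"
    unfolding is_comb_laplacian_def by blast
  have "transpose M = M"
    using W by (simp add: transpose_laplacian)
  moreover have "r \<noteq> s \<Longrightarrow> M $ r $ s \<le> 0" for r s
    using W by (simp add: laplacian_def weighted_graph_def)
  moreover have "M *v 1 = 0"
    using W(1) unfolding W(2) by (simp add: vec_eq_iff laplacian_mult_vec_nth weighted_graph_def)
  ultimately show "transpose M = M \<and> (\<forall>r s. r \<noteq> s \<longrightarrow> M $ r $ s \<le> 0) \<and> M *v 1 = 0"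
    by blast
next
  assume "transpose M = M \<and> (\<forall>r s. r \<noteq> s \<longrightarrow> M $ r $ s \<le> 0) \<and> M *v 1 = 0"
  then have sym: "M $ s $ r = M $ r $ s" and off: "r \<noteq> s \<Longrightarrow> M $ r $ s \<le> 0"
    and row_sum: "(\<Sum>k\<in>UNIV. M $ r $ k) = 0" for r s
    by (auto simp: vec_eq_iff transpose_def matrix_vector_mult_def)
  define W where "W r s = (if r = s then 0 else - M $ r $ s)" for r s
  have "weighted_graph W"
    unfolding weighted_graph_def W_def using off sym by auto
  moreover have "M $ r $ s = laplacian W $ r $ s" for r s
  proof (cases "r = s")
    case True
    have "(\<Sum>k\<in>UNIV. W r k) = M $ r $ r - (\<Sum>k\<in>UNIV. M $ r $ k)"
      by (simp add: sum.remove[of UNIV r] W_def sum_negf)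
    then show ?thesis using True row_sum by (simp add: laplacian_def)
  qed (simp add: laplacian_def W_def)
  ultimately show "is_comb_laplacian M"
    unfolding is_comb_laplacian_def by (auto simp: vec_eq_iff)
qed

lemma row_sum_single_nonzero:
  fixes Q :: "real^'r::finite^'v"
  assumes "\<And>i. \<exists>!r. Q $ i $ r \<noteq> 0" and "Q $ i $ r \<noteq> 0"
  shows "(Q *v 1) $ i = Q $ i $ r"
proof -
  have "(Q *v 1) $ i = (\<Sum>r'\<in>UNIV. Q $ i $ r')"
    by (simp add: matrix_vector_mult_def)
  also have "\<dots> = (\<Sum>r'\<in>UNIV. if r' = r then Q $ i $ r else 0)"
    by (rule sum.cong) (use assms in auto)
  finally show ?thesis by simp
qed

lemma congruence_entry:
  fixes Q :: "real^'r::finite^'v::finite"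
  shows "(transpose Q ** L ** Q) $ r $ s = (\<Sum>i\<in>UNIV. \<Sum>j\<in>UNIV. Q $ i $ r * L $ i $ j * Q $ j $ s)"
  by (simp add: matrix_matrix_mult_def transpose_def sum_distrib_left sum_distrib_right
      mult.assoc) (subst sum.swap, simp)

lemma laplacian_congruence_offdiag_nonpos:
  fixes Q :: "real^'r::finite^'v::finite"
  assumes "weighted_graph w"
    and single: "\<And>i. \<exists>!r. Q $ i $ r \<noteq> 0"
    and same_sign: "\<And>i j r s. 0 \<le> Q $ i $ r * Q $ j $ s"
    and "r \<noteq> s"
  shows "(transpose Q ** laplacian w ** Q) $ r $ s \<le> 0"
  unfolding congruence_entry
proof (intro sum_nonpos)
  fix i j
  show "Q $ i $ r * laplacian w $ i $ j * Q $ j $ s \<le> 0"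
  proof (cases "i = j")
    case True
    then have "Q $ i $ r = 0 \<or> Q $ j $ s = 0"
      using single[of i] \<open>r \<noteq> s\<close> by blast
    then show ?thesis by auto
  next
    case False
    have "0 \<le> w i j * (Q $ i $ r * Q $ j $ s)"
      using assms(1) same_sign by (simp add: weighted_graph_def)
    then show ?thesis
      using False by (simp add: laplacian_def algebra_simps)
  qed
qed

lemma laplacian_congruence_is_comb_laplacian_iff:
  fixes w :: "'v::finite \<Rightarrow> 'v \<Rightarrow> real" and Q :: "real^'r::finite^'v"
  assumes graph: "weighted_graph w" "connected_graph w"
    and single: "\<And>i. \<exists>!r. Q $ i $ r \<noteq> 0"
  shows "is_comb_laplacian (transpose Q ** laplacian w ** Q) \<longleftrightarrow>
    (\<forall>i r i' r'. Q $ i $ r \<noteq> 0 \<longrightarrow> Q $ i' $ r' \<noteq> 0 \<longrightarrow> Q $ i $ r = Q $ i' $ r')"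
    (is "is_comb_laplacian ?M \<longleftrightarrow> ?equal")
proof -
  define x where "x = Q *v 1"
  have x_nth: "Q $ i $ r \<noteq> 0 \<Longrightarrow> x $ i = Q $ i $ r" for i r
    unfolding x_def using single by (rule row_sum_single_nonzero)
  have equal_iff_constant: "?equal \<longleftrightarrow> (\<forall>i j. x $ i = x $ j)"
    by (metis single x_nth)
  have symmetric: "transpose ?M = ?M"
    by (simp add: matrix_transpose_mul transpose_laplacian[OF graph(1)] matrix_mul_assoc)
  have row_sums: "?M *v 1 = transpose Q *v (laplacian w *v x)"
    by (simp add: x_def matrix_vector_mul_assoc matrix_mul_assoc)
  have total_row_sum: "1 \<bullet> (?M *v 1) = x \<bullet> (laplacian w *v x)"
    unfolding row_sums transpose_matrix_vector x_def
    by (metis dot_lmul_matrix inner_commute)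
  show ?thesis
  proof
    assume "is_comb_laplacian ?M"
    then have "x \<bullet> (laplacian w *v x) = 0"
      using total_row_sum is_comb_laplacian_iff by (metis inner_zero_right)
    then show ?equal
      using equal_iff_constant laplacian_quadratic_form_eq_0_imp_constant graph by blast
  next
    assume ?equal
    then have "x = vec (x $ undefined)"
      using equal_iff_constant by (simp add: vec_eq_iff)
    then obtain c where "x = vec c" by blast
    moreover have "laplacian w *v vec c = 0"
      using graph(1) by (simp add: vec_eq_iff laplacian_mult_vec_nth weighted_graph_def)
    ultimately have "?M *v 1 = 0"
      using row_sums by simp
    moreover have "0 \<le> Q $ i $ r * Q $ j $ s" for i j r s
    proof (cases "Q $ i $ r = 0 \<or> Q $ j $ s = 0")
      case False
      then have "Q $ i $ r = Q $ j $ s"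
        using \<open>?equal\<close> by blast
      then show ?thesis by simp
    qed auto
    then have "r \<noteq> s \<Longrightarrow> ?M $ r $ s \<le> 0" for r s
      by (rule laplacian_congruence_offdiag_nonpos[OF graph(1) single])
    ultimately show "is_comb_laplacian ?M"
      using is_comb_laplacian_iff symmetric by blast
  qed
qed

theorem proposition2:
  fixes w :: "'v::finite \<Rightarrow> 'v \<Rightarrow> real" and P :: "real^'v^'r::finite"
  assumes "weighted_graph w"
    and "connected_graph w"
    and "coarsening_matrix w P"
  shows "is_comb_laplacian (transpose (pinv P) ** laplacian w ** pinv P) \<longleftrightarrow>
         (\<forall>i r i' r'. pinv P $ i $ r \<noteq> 0 \<longrightarrow> pinv P $ i' $ r' \<noteq> 0 \<longrightarrow>
                      pinv P $ i $ r = pinv P $ i' $ r')"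
proof -
  have columns: "\<And>i. \<exists>!r. P $ r $ i \<noteq> 0" and rows: "\<And>r. P $ r \<noteq> 0"
    using assms(3) by (auto simp: coarsening_matrix_def vec_eq_iff)
  have "pinv P = (\<chi> i r. P $ r $ i / (P $ r \<bullet> P $ r))"
    using pinv_orthogonal_rows rows_orthogonal_if_columns_single_nonzero[OF columns] rows
    by blast
  then have "\<exists>!r. pinv P $ i $ r \<noteq> 0" for i
    using columns rows by simp
  then show ?thesis
    using laplacian_congruence_is_comb_laplacian_iff assms(1,2) by blast
qed

end
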